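(* For each integer $r\geq 2$ let $\mathfrak{C}_r$ be the structure $(\mathbb{Z};0,+,\leq,P_2^r)$ in the language $\{0,+,\leq,R_2\}$, where $R_2$ is a unary relation symbol interpreted as $P_2^r(x)$: "$x$ is the square of an integer and $r$ does not divide $x$". Then there is a single positive existential formula in the language $\{0,+,R_2\}$ which, in every structure $\mathfrak{C}_r$ with $r\geq 2$, defines the relation $\leq$ on $\mathbb{Z}$. (That is, $\leq$ is uniformly positive existentially $\{0,+,R_2\}$-definable in the class $\{\mathfrak{C}_r : r\geq 2\}$.) *)

theory Defs
  imports Main
begin

datatype tm = TVar nat | TZero | TAdd tm tm

datatype pef = PEq tm tm | PR2 tm | PAnd pef pef | POr pef pef | PEx nat pef

fun tval :: "(nat \<Rightarrow> int) \<Rightarrow> tm \<Rightarrow> int" where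
  "tval e (TVar i) = e i"
| "tval e TZero = 0"
| "tval e (TAdd s t) = tval e s + tval e t"

definition P2 :: "int \<Rightarrow> int \<Rightarrow> bool" where
  "P2 r x \<longleftrightarrow> (\<exists>k::int. x = k ^ 2) \<and> \<not> r dvd x"

fun sat :: "int \<Rightarrow> (nat \<Rightarrow> int) \<Rightarrow> pef \<Rightarrow> bool" where
  "sat r e (PEq s t) = (tval e s = tval e t)"
| "sat r e (PR2 t) = P2 r (tval e t)"
| "sat r e (PAnd f g) = (sat r e f \<and> sat r e g)"
| "sat r e (POr f g) = (sat r e f \<or> sat r e g)"
| "sat r e (PEx v f) = (\<exists>a::int. sat r (e(v := a)) f)"

end

theory Submission
  imports Defs "HOL-Computational_Algebra.Primes"
begin

text \<open>
  The formula says 2y = 2x + t1 + ... + t16 with every ti zero or in P2^r. Such summands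
  are non-negative, so it implies x \<le> y. Conversely, r \<ge> 2 cannot divide two consecutive
  squares, so 2a^2 + 2 is either a^2 + a^2 + 1 + 1 or (a+1)^2 + (a-1)^2 + 0 + 0, a sum of four
  admissible numbers. Writing y - x - 4 as a sum of four squares (Lagrange's theorem, proved
  here by Euler's identity and descent) yields the sixteen summands when y - x \<ge> 4; smaller
  differences are sums of ones.
\<close>

definition sum4sq :: "int \<Rightarrow> bool" where
  "sum4sq n \<longleftrightarrow> (\<exists>a b c d. n = a\<^sup>2 + b\<^sup>2 + c\<^sup>2 + d\<^sup>2)"

lemma euler_four_square_identity:
  fixes a b c d w x y z :: int
  shows "(a\<^sup>2 + b\<^sup>2 + c\<^sup>2 + d\<^sup>2) * (w\<^sup>2 + x\<^sup>2 + y\<^sup>2 + z\<^sup>2) =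
    (a*w + b*x + c*y + d*z)\<^sup>2 + (a*x - b*w + c*z - d*y)\<^sup>2 +
    (a*y - b*z - c*w + d*x)\<^sup>2 + (a*z + b*y - c*x - d*w)\<^sup>2"
  by (simp add: power2_eq_square algebra_simps)

lemma sum4sq_mult: "sum4sq m \<Longrightarrow> sum4sq n \<Longrightarrow> sum4sq (m * n)"
  unfolding sum4sq_def using euler_four_square_identity by metis

lemma sum4sq_half:
  assumes "sum4sq (2 * k)"
  shows "sum4sq k"
proof -
  have paired: "sum4sq k"
    if "2 * k = a\<^sup>2 + b\<^sup>2 + c\<^sup>2 + d\<^sup>2" "even (a + b)" "even (c + d)" for a b c d
  proof -
    obtain u v where "a = 2*u - b" "c = 2*v - d"
      using \<open>even (a + b)\<close> \<open>even (c + d)\<close> by (metis evenE add_diff_cancel_right')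
    with that(1) have "k = u\<^sup>2 + (u - b)\<^sup>2 + v\<^sup>2 + (v - d)\<^sup>2"
      by (simp add: power2_eq_square algebra_simps)
    then show ?thesis unfolding sum4sq_def by blast
  qed
  obtain a b c d where abcd: "2 * k = a\<^sup>2 + b\<^sup>2 + c\<^sup>2 + d\<^sup>2"
    using assms unfolding sum4sq_def by blast
  then have "even (a + b + c + d)"
    by (metis dvd_triv_left even_add even_power zero_less_numeral)
  then consider "even (a + b)" "even (c + d)" | "even (a + c)" "even (b + d)"
    | "even (a + d)" "even (b + c)"
    by auto
  then show ?thesis
  proof cases
    case 1 then show ?thesis using paired abcd by blast
  next
    case 2 then show ?thesis using paired[of a c b d] abcd by (simp add: algebra_simps)
  next
    case 3 then show ?thesis using paired[of a d b c] abcd by (simp add: algebra_simps)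
  qed
qed

lemma odd_modulus_small_residue:
  fixes m x :: int
  assumes "odd m" "0 < m"
  obtains k where "4 * (x - m * k)\<^sup>2 < m\<^sup>2"
proof
  define h where "h = m div 2"
  have m: "m = 2 * h + 1" using \<open>odd m\<close> unfolding h_def by presburger
  have "x - m * ((x + h) div m) = (x + h) mod m - h"
    by (simp add: minus_div_mult_eq_mod [symmetric] algebra_simps)
  moreover have "0 \<le> (x + h) mod m" "(x + h) mod m < m" using \<open>0 < m\<close> by simp_all
  ultimately have "\<bar>x - m * ((x + h) div m)\<bar> \<le> h" using m by linarith
  then have "(x - m * ((x + h) div m))\<^sup>2 \<le> h\<^sup>2"
    by (metis abs_ge_zero power2_abs power_mono)
  moreover have "m\<^sup>2 = 4 * h\<^sup>2 + 4 * h + 1" "0 \<le> h" using m \<open>0 < m\<close>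
    by (simp_all add: power2_eq_square algebra_simps)
  ultimately show "4 * (x - m * ((x + h) div m))\<^sup>2 < m\<^sup>2" by linarith
qed

text \<open>Euler's identity applied to x and y = x - m k, where y \<equiv> x (mod m): all four
  resulting squares are divisible by m^2, which is the descent step of Lagrange's proof.\<close>
lemma sum4sq_reduce:
  fixes m p s x1 x2 x3 x4 k1 k2 k3 k4 :: int
  assumes "m \<noteq> 0"
    and mp: "m * p = x1\<^sup>2 + x2\<^sup>2 + x3\<^sup>2 + x4\<^sup>2"
    and ms: "m * s = (x1 - m*k1)\<^sup>2 + (x2 - m*k2)\<^sup>2 + (x3 - m*k3)\<^sup>2 + (x4 - m*k4)\<^sup>2"
  shows "sum4sq (s * p)"
proof -
  define y1 y2 y3 y4 where "y1 = x1 - m*k1" "y2 = x2 - m*k2" "y3 = x3 - m*k3" "y4 = x4 - m*k4"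
  define w1 where "w1 = p - (x1*k1 + x2*k2 + x3*k3 + x4*k4)"
  define w2 where "w2 = x2*k1 - x1*k2 - x3*k4 + x4*k3"
  define w3 where "w3 = x2*k4 - x1*k3 + x3*k1 - x4*k2"
  define w4 where "w4 = x3*k2 - x1*k4 - x2*k3 + x4*k1"
  have "x1*y1 + x2*y2 + x3*y3 + x4*y4 = m*w1"
    using mp unfolding w1_def y1_y2_y3_y4_def by (simp add: power2_eq_square algebra_simps)
  moreover have "x1*y2 - x2*y1 + x3*y4 - x4*y3 = m*w2"
    unfolding w2_def y1_y2_y3_y4_def by (simp add: algebra_simps)
  moreover have "x1*y3 - x2*y4 - x3*y1 + x4*y2 = m*w3"
    unfolding w3_def y1_y2_y3_y4_def by (simp add: algebra_simps)
  moreover have "x1*y4 + x2*y3 - x3*y2 - x4*y1 = m*w4"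
    unfolding w4_def y1_y2_y3_y4_def by (simp add: algebra_simps)
  ultimately have "(m*p) * (m*s) = (m*w1)\<^sup>2 + (m*w2)\<^sup>2 + (m*w3)\<^sup>2 + (m*w4)\<^sup>2"
    using euler_four_square_identity[of x1 x2 x3 x4 y1 y2 y3 y4]
    unfolding mp ms y1_y2_y3_y4_def by simp
  then have "(m*m) * (s*p) = (m*m) * (w1\<^sup>2 + w2\<^sup>2 + w3\<^sup>2 + w4\<^sup>2)"
    by (simp add: power2_eq_square algebra_simps)
  then show ?thesis
    using \<open>m \<noteq> 0\<close> unfolding sum4sq_def by auto
qed

lemma sum4sq_descent_odd:
  fixes m p x1 x2 x3 x4 :: int
  assumes mp: "m * p = x1\<^sup>2 + x2\<^sup>2 + x3\<^sup>2 + x4\<^sup>2"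
    and "odd m" "1 < m" "\<not> m dvd p"
  obtains s where "0 < s" "s < m" "sum4sq (s * p)"
proof -
  have "0 < m" using \<open>1 < m\<close> by simp
  obtain k1 k2 k3 k4 where small:
    "4 * (x1 - m*k1)\<^sup>2 < m\<^sup>2" "4 * (x2 - m*k2)\<^sup>2 < m\<^sup>2"
    "4 * (x3 - m*k3)\<^sup>2 < m\<^sup>2" "4 * (x4 - m*k4)\<^sup>2 < m\<^sup>2"
    using odd_modulus_small_residue[OF \<open>odd m\<close> \<open>0 < m\<close>] by metis
  define s where "s = p - 2 * (x1*k1 + x2*k2 + x3*k3 + x4*k4) + m * (k1\<^sup>2 + k2\<^sup>2 + k3\<^sup>2 + k4\<^sup>2)"
  have ms: "m * s = (x1 - m*k1)\<^sup>2 + (x2 - m*k2)\<^sup>2 + (x3 - m*k3)\<^sup>2 + (x4 - m*k4)\<^sup>2"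
    using mp unfolding s_def by (simp add: power2_eq_square algebra_simps)
  have "m * s < m * m"
    using small unfolding ms by (simp add: power2_eq_square)
  then have "s < m" using \<open>0 < m\<close> by simp
  have "0 \<le> m * s" unfolding ms by simp
  then have "0 \<le> s" using \<open>0 < m\<close> by (simp add: zero_le_mult_iff)
  moreover have "s \<noteq> 0"
  proof
    assume "s = 0"
    then have "x1 = m*k1 \<and> x2 = m*k2 \<and> x3 = m*k3 \<and> x4 = m*k4"
      using ms by (simp add: sum_power2_eq_zero_iff add_nonneg_eq_0_iff)
    then have "m * p = m * (m * (k1\<^sup>2 + k2\<^sup>2 + k3\<^sup>2 + k4\<^sup>2))"
      using mp by (simp add: power2_eq_square algebra_simps)
    then have "m dvd p" using \<open>0 < m\<close> by simp
    then show False using \<open>\<not> m dvd p\<close> by contradiction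
  qed
  ultimately have "0 < s" by simp
  then show thesis
    using that \<open>s < m\<close> sum4sq_reduce[OF _ mp ms] \<open>0 < m\<close> by simp
qed

lemma sum4sq_prime_of_multiple:
  fixes p m :: int
  assumes "prime p" "0 < m" "m < p" "sum4sq (m * p)"
  shows "sum4sq p"
  using assms(2-)
proof (induction "nat m" arbitrary: m rule: less_induct)
  case less
  consider "m = 1" | "even m" "1 < m" | "odd m" "1 < m"
    using \<open>0 < m\<close> by linarith
  then show ?case
  proof cases
    case 1
    then show ?thesis using \<open>sum4sq (m * p)\<close> by simp
  next
    case 2
    then obtain k where "m = 2 * k" by (elim evenE)
    then have "sum4sq (k * p)" using \<open>sum4sq (m * p)\<close> sum4sq_half by (simp add: mult.assoc)
    then show ?thesis using less.hyps[of k] \<open>m = 2 * k\<close> \<open>1 < m\<close> \<open>m < p\<close> by simp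
  next
    case 3
    obtain x1 x2 x3 x4 where "m * p = x1\<^sup>2 + x2\<^sup>2 + x3\<^sup>2 + x4\<^sup>2"
      using \<open>sum4sq (m * p)\<close> unfolding sum4sq_def by blast
    moreover have "\<not> m dvd p"
      using \<open>prime p\<close> \<open>1 < m\<close> \<open>m < p\<close> unfolding prime_int_iff by (auto dest!: spec[of _ m])
    ultimately obtain s where "0 < s" "s < m" "sum4sq (s * p)"
      using sum4sq_descent_odd \<open>odd m\<close> \<open>1 < m\<close> by metis
    then show ?thesis using less.hyps[of s] \<open>m < p\<close> by simp
  qed
qed

lemma prime_squares_inj_on_half:
  fixes p x y :: int
  assumes "prime p" "odd p" "x \<in> {0..p div 2}" "y \<in> {0..p div 2}" "p dvd x\<^sup>2 - y\<^sup>2"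
  shows "x = y"
proof -
  have "2 * (p div 2) < p" using \<open>odd p\<close> by presburger
  then have small: "\<bar>x - y\<bar> < p" "\<bar>x + y\<bar> < p" using assms(3,4) by auto
  have "x\<^sup>2 - y\<^sup>2 = (x - y) * (x + y)" by (simp add: power2_eq_square algebra_simps)
  then have "p dvd x - y \<or> p dvd x + y"
    using assms(1,5) prime_dvd_mult_iff by metis
  then have "x - y = 0 \<or> x + y = 0"
    using small dvd_imp_le_int by (metis abs_of_pos linorder_not_le prime_gt_0_int[OF \<open>prime p\<close>])
  then show ?thesis using assms(3,4) by auto
qed

text \<open>Pigeonhole: the p div 2 + 1 residues of x^2 and of -1 - y^2 are each pairwise
  distinct, so together they cannot fit into the p residues without a collision.\<close>
lemma prime_dvd_two_squares_plus_one:
  fixes p :: int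
  assumes "prime p" "odd p"
  obtains x y where "x \<in> {0..p div 2}" "y \<in> {0..p div 2}" "p dvd x\<^sup>2 + y\<^sup>2 + 1"
proof -
  define h where "h = p div 2"
  define A where "A = (\<lambda>x. x\<^sup>2 mod p) ` {0..h}"
  define B where "B = (\<lambda>y. (- 1 - y\<^sup>2) mod p) ` {0..h}"
  have p: "p = 2 * h + 1" "0 < p"
    using \<open>odd p\<close> prime_gt_0_int[OF \<open>prime p\<close>] unfolding h_def by presburger+
  have "inj_on (\<lambda>x. x\<^sup>2 mod p) {0..h}"
    by (rule inj_onI)
      (use prime_squares_inj_on_half[OF assms] in \<open>simp add: h_def mod_eq_dvd_iff\<close>)
  moreover have "inj_on (\<lambda>y. (- 1 - y\<^sup>2) mod p) {0..h}"
    by (rule inj_onI)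
      (simp add: h_def mod_eq_dvd_iff, metis prime_squares_inj_on_half[OF assms] atLeastAtMost_iff)
  ultimately have card_AB: "card A + card B = card {0..<p} + 1"
    unfolding A_def B_def using p by (simp add: card_image)
  have "A \<union> B \<subseteq> {0..<p}" unfolding A_def B_def using p(2) by auto
  have "A \<inter> B \<noteq> {}"
  proof
    assume "A \<inter> B = {}"
    then have "card (A \<union> B) = card A + card B"
      unfolding A_def B_def by (simp add: card_Un_disjoint)
    moreover have "card (A \<union> B) \<le> card {0..<p}"
      using \<open>A \<union> B \<subseteq> {0..<p}\<close> by (intro card_mono) auto
    ultimately show False using card_AB by simp
  qed
  then obtain x y where "x \<in> {0..h}" "y \<in> {0..h}" "x\<^sup>2 mod p = (- 1 - y\<^sup>2) mod p"
    unfolding A_def B_def by blast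
  moreover from this have "p dvd x\<^sup>2 + y\<^sup>2 + 1"
    by (simp add: mod_eq_dvd_iff algebra_simps)
  ultimately show thesis using that h_def by blast
qed

lemma prime_sum4sq:
  fixes p :: int
  assumes "prime p"
  shows "sum4sq p"
proof (cases "p = 2")
  case True
  then show ?thesis unfolding sum4sq_def by (intro exI[of _ 1] exI[of _ 0]) simp
next
  case False
  then have "odd p" using assms prime_odd_int prime_ge_2_int by (metis order_le_neq_trans)
  then obtain x y where xy: "x \<in> {0..p div 2}" "y \<in> {0..p div 2}" "p dvd x\<^sup>2 + y\<^sup>2 + 1"
    using prime_dvd_two_squares_plus_one assms by blast
  then obtain m where m: "x\<^sup>2 + y\<^sup>2 + 1 = p * m" by (elim dvdE)
  define h where "h = p div 2"
  have p: "p = 2 * h + 1" "0 < p"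
    using \<open>odd p\<close> prime_gt_0_int[OF assms] unfolding h_def by presburger+
  have "x\<^sup>2 \<le> h\<^sup>2" "y\<^sup>2 \<le> h\<^sup>2" using xy by (auto simp: h_def intro!: power_mono)
  moreover have "p * p = 4 * h\<^sup>2 + 4 * h + 1" using p by (simp add: power2_eq_square algebra_simps)
  moreover have "0 < h" using p prime_ge_2_int[OF assms] by simp
  ultimately have "p * m < p * p" using m zero_le_power2[of h] by linarith
  then have "m < p" using p by simp
  have "0 < p * m" unfolding m[symmetric] by (simp add: add_pos_nonneg)
  then have "0 < m" using p by (simp add: zero_less_mult_iff)
  moreover have "sum4sq (m * p)" unfolding sum4sq_def using m
    by (intro exI[of _ x] exI[of _ y] exI[of _ 1] exI[of _ 0]) (simp add: algebra_simps)
  ultimately show ?thesis using sum4sq_prime_of_multiple assms \<open>m < p\<close> by blast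
qed

theorem Lagrange_four_squares:
  fixes n :: int
  assumes "0 \<le> n"
  shows "sum4sq n"
  using assms
proof (induction n rule: prime_divisors_induct)
  case zero
  then show ?case unfolding sum4sq_def by (intro exI[of _ 0]) simp
next
  case (unit x)
  then have "x = 1" by simp
  then show ?case unfolding sum4sq_def by (intro exI[of _ 1] exI[of _ 0]) simp
next
  case (factor p x)
  then have "0 \<le> x" using prime_gt_0_int[of p] by (auto simp: zero_le_mult_iff)
  then show ?case using factor prime_sum4sq sum4sq_mult by blast
qed

definition P2_or_zero :: "int \<Rightarrow> int \<Rightarrow> bool" where
  "P2_or_zero r t \<longleftrightarrow> t = 0 \<or> P2 r t"

lemma P2_or_zero_nonneg: "P2_or_zero r t \<Longrightarrow> 0 \<le> t"
  unfolding P2_or_zero_def P2_def by auto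

lemma P2_one: "2 \<le> r \<Longrightarrow> P2 r 1"
  unfolding P2_def by (auto intro!: exI[of _ 1])

lemma dvd_consecutive_squares_is_unit:
  fixes r a :: int
  assumes "r dvd a\<^sup>2" "r dvd (a + 1)\<^sup>2"
  shows "is_unit r"
proof -
  have "coprime (a\<^sup>2) ((a + 1)\<^sup>2)" by (simp add: coprime_power_left_iff)
  then show ?thesis using coprime_common_divisor[OF _ assms] by blast
qed

lemma double_square_plus_two_P2_or_zero:
  fixes r a :: int
  assumes "2 \<le> r"
  obtains ts where "length ts = 4" "\<forall>t\<in>set ts. P2_or_zero r t" "sum_list ts = 2 * a\<^sup>2 + 2"
proof (cases "r dvd a\<^sup>2")
  case True
  then have "\<not> r dvd (a + 1)\<^sup>2" "\<not> r dvd (a - 1)\<^sup>2"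
    using dvd_consecutive_squares_is_unit[of r a] dvd_consecutive_squares_is_unit[of r "a - 1"]
      \<open>2 \<le> r\<close> by auto
  then have "P2 r ((a + 1)\<^sup>2)" "P2 r ((a - 1)\<^sup>2)" unfolding P2_def by blast+
  then show thesis
    by (intro that[of "[(a + 1)\<^sup>2, (a - 1)\<^sup>2, 0, 0]"])
       (auto simp: P2_or_zero_def power2_eq_square algebra_simps)
next
  case False
  then have "P2 r (a\<^sup>2)" unfolding P2_def by blast
  then show thesis
    using P2_one[OF \<open>2 \<le> r\<close>]
    by (intro that[of "[a\<^sup>2, a\<^sup>2, 1, 1]"]) (auto simp: P2_or_zero_def)
qed

lemma even_nonneg_sum16_P2_or_zero:
  fixes r n :: int
  assumes "2 \<le> r" "0 \<le> n"
  obtains ts where "length ts = 16" "\<forall>t\<in>set ts. P2_or_zero r t" "sum_list ts = 2 * n"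
proof (cases "4 \<le> n")
  case True
  then obtain a b c d where abcd: "n - 4 = a\<^sup>2 + b\<^sup>2 + c\<^sup>2 + d\<^sup>2"
    using Lagrange_four_squares[of "n - 4"] unfolding sum4sq_def by auto
  obtain ta where "length ta = 4" "\<forall>t\<in>set ta. P2_or_zero r t" "sum_list ta = 2 * a\<^sup>2 + 2"
    using double_square_plus_two_P2_or_zero[OF \<open>2 \<le> r\<close>] by blast
  moreover obtain tb where "length tb = 4" "\<forall>t\<in>set tb. P2_or_zero r t" "sum_list tb = 2 * b\<^sup>2 + 2"
    using double_square_plus_two_P2_or_zero[OF \<open>2 \<le> r\<close>] by blast
  moreover obtain tc where "length tc = 4" "\<forall>t\<in>set tc. P2_or_zero r t" "sum_list tc = 2 * c\<^sup>2 + 2"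
    using double_square_plus_two_P2_or_zero[OF \<open>2 \<le> r\<close>] by blast
  moreover obtain td where "length td = 4" "\<forall>t\<in>set td. P2_or_zero r t" "sum_list td = 2 * d\<^sup>2 + 2"
    using double_square_plus_two_P2_or_zero[OF \<open>2 \<le> r\<close>] by blast
  ultimately show thesis
    using abcd by (intro that[of "ta @ tb @ tc @ td"]) auto
next
  case False
  let ?ts = "replicate (nat (2 * n)) 1 @ replicate (16 - nat (2 * n)) 0"
  show thesis
  proof (rule that[of ?ts])
    show "length ?ts = 16" using False by simp
    show "\<forall>t\<in>set ?ts. P2_or_zero r t"
      using P2_one[OF \<open>2 \<le> r\<close>] by (auto simp: P2_or_zero_def)
    show "sum_list ?ts = 2 * n" using \<open>0 \<le> n\<close> by (simp add: sum_list_replicate)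
  qed
qed

lemma sat_foldr_PEx:
  "sat r e (foldr PEx vs f) \<longleftrightarrow> (\<exists>e'. (\<forall>i. i \<notin> set vs \<longrightarrow> e' i = e i) \<and> sat r e' f)"
proof (induction vs arbitrary: e)
  case Nil
  then show ?case by auto
next
  case (Cons v vs)
  show ?case
  proof
    assume "sat r e (foldr PEx (v # vs) f)"
    then obtain a where "sat r (e(v := a)) (foldr PEx vs f)" by auto
    then obtain e' where "\<forall>i. i \<notin> set vs \<longrightarrow> e' i = (e(v := a)) i" "sat r e' f"
      using Cons.IH by blast
    then show "\<exists>e'. (\<forall>i. i \<notin> set (v # vs) \<longrightarrow> e' i = e i) \<and> sat r e' f"
      by (intro exI[of _ e']) auto
  next
    assume "\<exists>e'. (\<forall>i. i \<notin> set (v # vs) \<longrightarrow> e' i = e i) \<and> sat r e' f"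
    then obtain e' where e': "\<forall>i. i \<notin> set (v # vs) \<longrightarrow> e' i = e i" "sat r e' f" by blast
    then have "sat r (e(v := e' v)) (foldr PEx vs f)" using Cons.IH by auto
    then show "sat r e (foldr PEx (v # vs) f)" by auto
  qed
qed

definition PR2_or_zero :: "tm \<Rightarrow> pef" where
  "PR2_or_zero t = POr (PEq t TZero) (PR2 t)"

definition PAll_R2_or_zero :: "nat list \<Rightarrow> pef" where
  "PAll_R2_or_zero vs = foldr (\<lambda>v. PAnd (PR2_or_zero (TVar v))) vs (PEq TZero TZero)"

definition TSum :: "nat list \<Rightarrow> tm" where
  "TSum vs = foldr (\<lambda>v. TAdd (TVar v)) vs TZero"

lemma sat_PAll_R2_or_zero:
  "sat r e (PAll_R2_or_zero vs) \<longleftrightarrow> (\<forall>v\<in>set vs. P2_or_zero r (e v))"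
  unfolding PAll_R2_or_zero_def PR2_or_zero_def P2_or_zero_def by (induction vs) auto

lemma tval_TSum: "tval e (TSum vs) = sum_list (map e vs)"
  unfolding TSum_def by (induction vs) auto

definition summand_vars :: "nat list" where
  "summand_vars = [2..<18]"

lemma summand_vars_simps: "set summand_vars = {2..<18}" "length summand_vars = 16"
  "i < 16 \<Longrightarrow> summand_vars ! i = i + 2"
  unfolding summand_vars_def by (simp_all only: set_upt length_upt nth_upt)

text \<open>Variables 0 and 1 are the free variables x, y of x \<le> y; variables 2, ..., 17 are
  the existentially quantified summands.\<close>
definition le_formula :: pef where
  "le_formula = foldr PEx summand_vars (PAnd (PAll_R2_or_zero summand_vars)
     (PEq (TAdd (TVar 1) (TVar 1)) (TAdd (TAdd (TVar 0) (TVar 0)) (TSum summand_vars))))"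

lemma sat_le_formula:
  "sat r e le_formula \<longleftrightarrow>
    (\<exists>ts. length ts = 16 \<and> (\<forall>t\<in>set ts. P2_or_zero r t) \<and> 2 * e 1 = 2 * e 0 + sum_list ts)"
    (is "_ \<longleftrightarrow> ?rhs")
proof -
  have "sat r e le_formula \<longleftrightarrow> (\<exists>e'. (\<forall>i. i \<notin> set summand_vars \<longrightarrow> e' i = e i) \<and>
      (\<forall>v\<in>set summand_vars. P2_or_zero r (e' v)) \<and>
      e' 1 + e' 1 = e' 0 + e' 0 + sum_list (map e' summand_vars))"
    (is "_ \<longleftrightarrow> (\<exists>e'. ?agree e' \<and> ?summands e' \<and> ?eq e')")
    unfolding le_formula_def sat_foldr_PEx
    by (simp only: sat.simps sat_PAll_R2_or_zero tval.simps tval_TSum)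
  also have "\<dots> \<longleftrightarrow> ?rhs"
  proof
    assume "\<exists>e'. ?agree e' \<and> ?summands e' \<and> ?eq e'"
    then obtain e' where "?agree e'" "?summands e'" "?eq e'" by blast
    then show ?rhs
      by (intro exI[of _ "map e' summand_vars"]) (auto simp: summand_vars_simps)
  next
    assume ?rhs
    then obtain ts where ts: "length ts = 16" "\<forall>t\<in>set ts. P2_or_zero r t"
      "2 * e 1 = 2 * e 0 + sum_list ts" by blast
    define e' where "e' i = (if i \<in> set summand_vars then ts ! (i - 2) else e i)" for i
    have "map e' summand_vars = ts"
      by (rule nth_equalityI) (auto simp: e'_def ts(1) summand_vars_simps)
    moreover have "?summands e'"
      using ts(1,2) by (auto simp: e'_def summand_vars_simps)
    ultimately show "\<exists>e'. ?agree e' \<and> ?summands e' \<and> ?eq e'"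
      using ts(3) by (intro exI[of _ e']) (auto simp: e'_def summand_vars_simps)
  qed
  finally show ?thesis .
qed

theorem proposition1p4:
  shows "\<exists>\<phi>::pef. \<forall>r::int. r \<ge> 2 \<longrightarrow>
           (\<forall>e::nat \<Rightarrow> int. sat r e \<phi> \<longleftrightarrow> e 0 \<le> e 1)"
proof (intro exI[of _ le_formula] allI impI)
  fix r :: int and e :: "nat \<Rightarrow> int"
  assume "r \<ge> 2"
  show "sat r e le_formula \<longleftrightarrow> e 0 \<le> e 1"
  proof
    assume "sat r e le_formula"
    then obtain ts where "\<forall>t\<in>set ts. P2_or_zero r t" "2 * e 1 = 2 * e 0 + sum_list ts"
      unfolding sat_le_formula by blast
    moreover from this have "0 \<le> sum_list ts"
      by (intro sum_list_nonneg) (auto dest: P2_or_zero_nonneg)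
    ultimately show "e 0 \<le> e 1" by linarith
  next
    assume "e 0 \<le> e 1"
    then obtain ts where "length ts = 16" "\<forall>t\<in>set ts. P2_or_zero r t"
      "sum_list ts = 2 * (e 1 - e 0)"
      using even_nonneg_sum16_P2_or_zero[OF \<open>r \<ge> 2\<close>, of "e 1 - e 0"] by auto
    then show "sat r e le_formula" unfolding sat_le_formula by auto
  qed
qed

end
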